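(* Let $T>0$ and let $f:\Omega\times[0,T]\times\mathbb{R}\times\mathbb{R}^d\to\mathbb{R}$ satisfy: for every $(y,z)$, $f(\cdot,y,z)\in L^2_{\mathcal{F}}(0,T)$, and there is $\mu>0$ with $|f(t,y,z)-f(t,\bar y,\bar z)|\le\mu(|y-\bar y|+|z-\bar z|)$ for all $y,\bar y\in\mathbb{R}$, $z,\bar z\in\mathbb{R}^d$. For $(t,y,z)\in[0,T]\times\mathbb{R}\times\mathbb{R}^d$ let $(Y^{t,y,z}_s)_{s\in[t,T]}$ be the solution of $Y^{t,y,z}_s=y-\int_t^s f(r,Y^{t,y,z}_r,z)\,dr+z\cdot(B_s-B_t)$, $s\in[t,T]$. For $n\ge1$ set $t^n_i=i2^{-n}T$, $i=0,\dots,2^n$, and $f^n(s,y,z):=\sum_{i=0}^{2^n-1}f(s,Y^{t^n_i,y,z}_s,z)\,\mathbf{1}_{[t^n_i,t^n_{i+1})}(s)$, $s\in[0,T]$. Then for each fixed $(y,z)\in\mathbb{R}\times\mathbb{R}^d$, $\lim_{n\to\infty}E\int_0^T|f^n(s,y,z)-f(s,y,z)|^2ds=0$.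
   Context: Let $(\Omega,\mathcal{F},P)$ be a probability space carrying a $d$-dimensional Brownian motion $(B_t)_{t\ge0}$, and let $\mathcal{F}_t=\sigma\{B_s, s\le t\}$ be its natural filtration. $L^2_{\mathcal{F}}(0,T)$ denotes the space of $(\mathcal{F}_t)$-adapted real processes $\phi$ with $E\int_0^T|\phi_s|^2ds<\infty$. *)

theory Defs
  imports "HOL-Probability.Probability"
begin

definition brownian_motion :: "'a measure \<Rightarrow> (real \<Rightarrow> 'a \<Rightarrow> real^'d) \<Rightarrow> bool" where
  "brownian_motion M B \<longleftrightarrow>
     prob_space M \<and>
     (\<forall>t. B t \<in> borel_measurable M) \<and>
     (\<forall>\<omega>\<in>space M. B 0 \<omega> = 0) \<and>
     (\<forall>\<omega>\<in>space M. continuous_on {0..} (\<lambda>t. B t \<omega>)) \<and>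
     (\<forall>s t. 0 \<le> s \<and> s < t \<longrightarrow>
        (\<forall>i. distributed M lborel (\<lambda>\<omega>. (B t \<omega> - B s \<omega>) $ i) (normal_density 0 (sqrt (t - s)))) \<and>
        prob_space.indep_vars M (\<lambda>_. borel) (\<lambda>i \<omega>. (B t \<omega> - B s \<omega>) $ i) UNIV) \<and>
     (\<forall>(n::nat) (ts::nat \<Rightarrow> real). 0 \<le> ts 0 \<and> (\<forall>i<n. ts i \<le> ts (Suc i)) \<longrightarrow>
        prob_space.indep_vars M (\<lambda>_. borel) (\<lambda>i \<omega>. B (ts (Suc i)) \<omega> - B (ts i) \<omega>) {..<n})"

definition nat_filtration :: "'a measure \<Rightarrow> (real \<Rightarrow> 'a \<Rightarrow> real^'d) \<Rightarrow> real \<Rightarrow> 'a measure" where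
  "nat_filtration M B t =
     sigma (space M) (\<Union>s\<in>{0..t}. {B s -` A \<inter> space M | A. A \<in> sets (borel :: (real^'d) measure)})"

definition L2F :: "'a measure \<Rightarrow> (real \<Rightarrow> 'a \<Rightarrow> real^'d) \<Rightarrow> real \<Rightarrow> (real \<Rightarrow> 'a \<Rightarrow> real) \<Rightarrow> bool" where
  "L2F M B T \<phi> \<longleftrightarrow>
     (\<lambda>(s, \<omega>). \<phi> s \<omega>) \<in> borel_measurable (restrict_space lborel {0..T} \<Otimes>\<^sub>M M) \<and>
     (\<forall>t\<in>{0..T}. \<phi> t \<in> borel_measurable (nat_filtration M B t)) \<and>
     (\<integral>\<^sup>+\<omega>. (\<integral>\<^sup>+s. indicator {0..T} s * ennreal ((\<phi> s \<omega>)\<^sup>2) \<partial>lborel) \<partial>M) < \<infinity>"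

definition dyad :: "real \<Rightarrow> nat \<Rightarrow> nat \<Rightarrow> real" where
  "dyad T n i = real i * T / 2 ^ n"

text \<open>f^n(s,y,z) = sum_{i<2^n} f(s, Y^{t^n_i,y,z}_s, z) 1_{[t^n_i, t^n_{i+1})}(s).
  Arguments: f \<omega> s y z, and Y t y z s \<omega>.\<close>
definition fn_approx ::
  "('a \<Rightarrow> real \<Rightarrow> real \<Rightarrow> real^'d \<Rightarrow> real) \<Rightarrow> (real \<Rightarrow> real \<Rightarrow> real^'d \<Rightarrow> real \<Rightarrow> 'a \<Rightarrow> real)
    \<Rightarrow> real \<Rightarrow> nat \<Rightarrow> 'a \<Rightarrow> real \<Rightarrow> real \<Rightarrow> real^'d \<Rightarrow> real" where
  "fn_approx f Y T n \<omega> s y z =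
     (\<Sum>i<2^n. f \<omega> s (Y (dyad T n i) y z s \<omega>) z * indicator {dyad T n i..<dyad T n (Suc i)} s)"

end

theory Submission
  imports Defs
begin

text \<open>
  On a dyadic cell [t, t + h], h = T / 2^n, the approximation differs from f(s, y, z) only in its
  second argument, so by the Lipschitz bound its error is at most mu |Y^t_s - y|. Along a path,
  Y^t_s - y is minus the drift integral plus z . (B_s - B_t). Comparing the drift with f(r, y, z)
  and using Cauchy-Schwarz, the L^2 norm of Y^t - y over the cell reappears on the right-hand side
  with the factor 3 mu^2 h^2; once mu^2 h^2 <= 1/6 it can be absorbed, which gives
  int_cell |Y^t - y|^2 <= 6 h^2 int_0^T f(s, y, z)^2 ds + 6 |z|^2 int_cell |B_s - B_t|^2 ds.
  As E |B_s - B_t|^2 = d (s - t), taking expectations and summing over the 2^n cells bounds the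
  error by 6 mu^2 T h (E int_0^T f(s, y, z)^2 ds + d |z|^2), which tends to 0.
\<close>

lemma ennreal_square_sum3_le:
  fixes a b c :: ennreal
  shows "(a + b + c)\<^sup>2 \<le> 3 * (a\<^sup>2 + b\<^sup>2 + c\<^sup>2)"
proof (cases "a = \<top> \<or> b = \<top> \<or> c = \<top>")
  case True
  then show ?thesis
    by (auto simp: power2_eq_square ennreal_mult_eq_top_iff)
next
  case False
  then obtain a' b' c' where abc: "a = ennreal a'" "b = ennreal b'" "c = ennreal c'"
    and nonneg: "0 \<le> a'" "0 \<le> b'" "0 \<le> c'"
    by (metis ennreal_cases)
  have "0 \<le> (a' - b')\<^sup>2 + (b' - c')\<^sup>2 + (a' - c')\<^sup>2"
    by simp
  then have "(a' + b' + c')\<^sup>2 \<le> 3 * (a'\<^sup>2 + b'\<^sup>2 + c'\<^sup>2)"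
    by (simp add: power2_eq_square algebra_simps)
  then have "ennreal ((a' + b' + c')\<^sup>2) \<le> ennreal (3 * (a'\<^sup>2 + b'\<^sup>2 + c'\<^sup>2))"
    by (rule ennreal_leI)
  then show ?thesis
    using nonneg by (simp add: abc ennreal_power[symmetric] ennreal_mult')
qed

lemma ennreal_absorb:
  fixes U X :: ennreal and q :: real
  assumes fin: "U < \<top>" and le: "U \<le> X + ennreal q * U" and q: "q \<le> 1/2"
  shows "U \<le> 2 * X"
proof (cases "X = \<top>")
  case False
  obtain u x where ux: "U = ennreal u" "X = ennreal x" "0 \<le> u" "0 \<le> x"
    using fin False by (metis ennreal_cases less_top)
  have "ennreal q * ennreal u = ennreal (max 0 q * u)"
    by (cases "0 \<le> q") (auto simp: ennreal_mult' ennreal_neg)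
  then have "ennreal u \<le> ennreal (x + max 0 q * u)"
    using le ux by (simp add: ennreal_plus)
  then have "u \<le> x + max 0 q * u"
    using ux by (subst (asm) ennreal_le_iff) auto
  moreover have "max 0 q * u \<le> 1/2 * u"
    using q ux by (intro mult_right_mono) auto
  ultimately have "ennreal u \<le> ennreal (2 * x)"
    by (intro ennreal_leI) linarith
  then show ?thesis
    using ux by (simp add: ennreal_mult')
qed simp

lemma borel_measurable_indicator_ennreal_comp:
  fixes f g :: "real \<Rightarrow> real"
  assumes A: "A \<in> sets borel" and f: "(\<lambda>s. indicator A s * f s) \<in> borel_measurable borel"
    and g: "g \<in> borel_measurable borel"
  shows "(\<lambda>s. indicator A s * ennreal (g (f s))) \<in> borel_measurable borel"
proof -
  have "(\<lambda>s. indicator A s * ennreal (g (indicator A s * f s))) \<in> borel_measurable borel"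
    using A measurable_compose[OF f g] by measurable
  then show ?thesis
    by (rule measurable_cong[THEN iffD1, rotated]) (simp split: split_indicator)
qed

lemma borel_measurable_indicator_norm_square:
  fixes \<beta> :: "real \<Rightarrow> 'v::real_normed_vector"
  assumes "continuous_on {a..b} \<beta>"
  shows "(\<lambda>s. indicator {a..b} s * ennreal ((norm (\<beta> s))\<^sup>2)) \<in> borel_measurable borel"
proof -
  have "(\<lambda>s. indicator {a..b} s *\<^sub>R \<beta> s) \<in> borel_measurable borel"
    using assms by (intro borel_measurable_continuous_on_indicator) auto
  then have "(\<lambda>s. ennreal ((norm (indicator {a..b} s *\<^sub>R \<beta> s))\<^sup>2)) \<in> borel_measurable borel"
    by measurable
  then show ?thesis
    by (rule measurable_cong[THEN iffD1, rotated]) (simp split: split_indicator)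
qed

lemma borel_measurable_indicator_times_restrict_pair:
  fixes \<phi> :: "real \<Rightarrow> 'a \<Rightarrow> real"
  assumes "(\<lambda>(s, \<omega>). \<phi> s \<omega>) \<in> borel_measurable (restrict_space lborel {a..b} \<Otimes>\<^sub>M M)"
  shows "(\<lambda>(s, \<omega>). indicator {a..b} s * \<phi> s \<omega>) \<in> borel_measurable (lborel \<Otimes>\<^sub>M M)"
proof -
  have space_pair: "space (lborel \<Otimes>\<^sub>M M) = UNIV \<times> space M"
    by (simp add: space_pair_measure)
  have "(\<lambda>x. (fst x, snd x)) \<in> measurable (restrict_space (lborel \<Otimes>\<^sub>M M) ({a..b} \<times> space M))
          (restrict_space lborel {a..b} \<Otimes>\<^sub>M M)"
  proof (rule measurable_Pair)
    show "fst \<in> measurable (restrict_space (lborel \<Otimes>\<^sub>M M) ({a..b} \<times> space M)) (restrict_space lborel {a..b})"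
      by (intro measurable_restrict_space2 measurable_restrict_space1 measurable_fst)
         (auto simp: space_restrict_space space_pair)
    show "snd \<in> measurable (restrict_space (lborel \<Otimes>\<^sub>M M) ({a..b} \<times> space M)) M"
      by (intro measurable_restrict_space1 measurable_snd)
  qed
  from measurable_compose[OF this assms]
  have "(\<lambda>x. if x \<in> {a..b} \<times> space M then \<phi> (fst x) (snd x) else 0) \<in> borel_measurable (lborel \<Otimes>\<^sub>M M)"
    by (subst (asm) measurable_restrict_space_iff) (auto simp: space_pair split_beta')
  then show ?thesis
    by (rule measurable_cong[THEN iffD1, rotated]) (auto simp: space_pair indicator_def)
qed

lemma borel_measurable_indicator_times_section:
  fixes \<phi> :: "real \<Rightarrow> 'a \<Rightarrow> real"
  assumes "(\<lambda>(s, \<omega>). \<phi> s \<omega>) \<in> borel_measurable (restrict_space lborel {a..b} \<Otimes>\<^sub>M M)"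
    and "\<omega> \<in> space M"
  shows "(\<lambda>s. indicator {a..b} s * \<phi> s \<omega>) \<in> borel_measurable borel"
  using measurable_compose[OF measurable_Pair2'[OF assms(2)]
      borel_measurable_indicator_times_restrict_pair[OF assms(1)]]
  by (simp add: measurable_lborel2)

lemma borel_measurable_nn_integral_indicator_square:
  fixes \<phi> :: "real \<Rightarrow> 'a \<Rightarrow> real"
  assumes "(\<lambda>(s, \<omega>). \<phi> s \<omega>) \<in> borel_measurable (restrict_space lborel {a..b} \<Otimes>\<^sub>M M)"
  shows "(\<lambda>\<omega>. \<integral>\<^sup>+s. indicator {a..b} s * ennreal ((\<phi> s \<omega>)\<^sup>2) \<partial>lborel) \<in> borel_measurable M"
proof -
  have [measurable]: "(\<lambda>(s, \<omega>). indicator {a..b} s * \<phi> s \<omega>) \<in> borel_measurable (lborel \<Otimes>\<^sub>M M)"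
    by (rule borel_measurable_indicator_times_restrict_pair[OF assms])
  have "(\<lambda>\<omega>. \<integral>\<^sup>+s. ennreal ((indicator {a..b} s * \<phi> s \<omega>)\<^sup>2) \<partial>lborel) \<in> borel_measurable M"
    by measurable
  then show ?thesis
    by (rule measurable_cong[THEN iffD1, rotated]) (auto intro!: nn_integral_cong split: split_indicator)
qed

lemma ennreal_abs_set_integral_le:
  fixes F :: "'a \<Rightarrow> real"
  assumes "set_integrable M S F"
  shows "ennreal \<bar>LINT r:S|M. F r\<bar> \<le> (\<integral>\<^sup>+r. indicator S r * ennreal \<bar>F r\<bar> \<partial>M)"
proof -
  have "ennreal (norm (LINT r:S|M. F r)) \<le> (\<integral>\<^sup>+r. ennreal (norm (indicator S r *\<^sub>R F r)) \<partial>M)"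
    using assms unfolding set_integrable_def set_lebesgue_integral_def
    by (rule integral_norm_bound_ennreal)
  also have "\<dots> = (\<integral>\<^sup>+r. indicator S r * ennreal \<bar>F r\<bar> \<partial>M)"
    by (intro nn_integral_cong) (simp split: split_indicator)
  finally show ?thesis by simp
qed

lemma nn_integral_Icc_Cauchy_Schwarz:
  fixes \<phi> :: "real \<Rightarrow> real"
  assumes meas: "(\<lambda>s. indicator {a..b} s * ennreal \<bar>\<phi> s\<bar>) \<in> borel_measurable borel" and ab: "a \<le> b"
  shows "(\<integral>\<^sup>+s. indicator {a..b} s * ennreal \<bar>\<phi> s\<bar> \<partial>lborel)\<^sup>2
     \<le> ennreal (b - a) * (\<integral>\<^sup>+s. indicator {a..b} s * ennreal ((\<phi> s)\<^sup>2) \<partial>lborel)"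
proof -
  have "(\<integral>\<^sup>+s. indicator {a..b} s * (indicator {a..b} s * ennreal \<bar>\<phi> s\<bar>) \<partial>lborel)\<^sup>2
     \<le> (\<integral>\<^sup>+s. (indicator {a..b} s)\<^sup>2 \<partial>lborel) * (\<integral>\<^sup>+s. (indicator {a..b} s * ennreal \<bar>\<phi> s\<bar>)\<^sup>2 \<partial>lborel)"
    using meas by (intro Cauchy_Schwarz_nn_integral) (auto simp: measurable_lborel2)
  moreover have "(\<lambda>s. indicator {a..b} s * (indicator {a..b} s * ennreal \<bar>\<phi> s\<bar>))
      = (\<lambda>s. indicator {a..b} s * ennreal \<bar>\<phi> s\<bar>)"
    and "(\<lambda>s. (indicator {a..b} s :: ennreal)\<^sup>2) = indicator {a..b}"
    and "(\<lambda>s. (indicator {a..b} s * ennreal \<bar>\<phi> s\<bar>)\<^sup>2) = (\<lambda>s. indicator {a..b} s * ennreal ((\<phi> s)\<^sup>2))"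
    by (auto simp: fun_eq_iff ennreal_power power2_abs split: split_indicator)
  ultimately show ?thesis
    using ab by simp
qed

lemma nn_integral_indicator_inner_square_le:
  fixes \<beta> :: "real \<Rightarrow> 'v::euclidean_space" and z :: 'v
  assumes \<beta>_cont: "continuous_on {a..b} \<beta>"
  shows "(\<integral>\<^sup>+s. indicator {a..b} s * ennreal ((z \<bullet> \<beta> s)\<^sup>2) \<partial>lborel)
    \<le> ennreal ((norm z)\<^sup>2) * (\<integral>\<^sup>+s. indicator {a..b} s * ennreal ((norm (\<beta> s))\<^sup>2) \<partial>lborel)"
proof -
  have "\<bar>z \<bullet> \<beta> s\<bar>\<^sup>2 \<le> (norm z * norm (\<beta> s))\<^sup>2" for s
    using Cauchy_Schwarz_ineq2[of z "\<beta> s"] by (intro power_mono) auto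
  then have "(z \<bullet> \<beta> s)\<^sup>2 \<le> (norm z)\<^sup>2 * (norm (\<beta> s))\<^sup>2" for s
    by (simp add: power_mult_distrib)
  then have "(\<integral>\<^sup>+s. indicator {a..b} s * ennreal ((z \<bullet> \<beta> s)\<^sup>2) \<partial>lborel)
      \<le> (\<integral>\<^sup>+s. ennreal ((norm z)\<^sup>2) * (indicator {a..b} s * ennreal ((norm (\<beta> s))\<^sup>2)) \<partial>lborel)"
    by (intro nn_integral_mono) (simp add: ennreal_leI flip: ennreal_mult split: split_indicator)
  also have "\<dots> = ennreal ((norm z)\<^sup>2) * (\<integral>\<^sup>+s. indicator {a..b} s * ennreal ((norm (\<beta> s))\<^sup>2) \<partial>lborel)"
    using borel_measurable_indicator_norm_square[OF \<beta>_cont]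
    by (intro nn_integral_cmult) (simp add: measurable_lborel2)
  finally show ?thesis .
qed

section \<open>A priori estimates for a perturbed integral equation\<close>

lemma integral_equation_L2_finite:
  fixes F Yf \<beta> :: "real \<Rightarrow> real"
  assumes \<beta>_cont: "continuous_on {a..b} \<beta>"
    and sol: "\<And>s. s \<in> {a..b} \<Longrightarrow> set_integrable lborel {a..s} F \<and>
                 Yf s = y - (LINT r:{a..s}|lborel. F r) + \<beta> s"
  shows "(\<integral>\<^sup>+s. indicator {a..b} s * ennreal ((Yf s - y)\<^sup>2) \<partial>lborel) < \<top>"
proof (cases "a \<le> b")
  case True
  have "bounded (\<beta> ` {a..b})"
    by (intro compact_imp_bounded compact_continuous_image \<beta>_cont compact_Icc)
  then obtain K\<^sub>\<beta> where K\<^sub>\<beta>: "\<And>s. s \<in> {a..b} \<Longrightarrow> \<bar>\<beta> s\<bar> \<le> K\<^sub>\<beta>"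
    unfolding bounded_iff by fastforce
  define \<Phi> where "\<Phi> = (\<integral>\<^sup>+r. indicator {a..b} r * ennreal \<bar>F r\<bar> \<partial>lborel)"
  have "(\<integral>\<^sup>+r. ennreal (norm (indicator {a..b} r *\<^sub>R F r)) \<partial>lborel) < \<infinity>"
    using sol[of b] True unfolding set_integrable_def integrable_iff_bounded by simp
  also have "(\<integral>\<^sup>+r. ennreal (norm (indicator {a..b} r *\<^sub>R F r)) \<partial>lborel) = \<Phi>"
    unfolding \<Phi>_def by (intro nn_integral_cong) (simp split: split_indicator)
  finally have \<Phi>_fin: "\<Phi> < \<top>" by simp
  have bound: "(Yf s - y)\<^sup>2 \<le> (enn2real \<Phi> + K\<^sub>\<beta>)\<^sup>2" if s: "s \<in> {a..b}" for s
  proof -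
    have "ennreal \<bar>LINT r:{a..s}|lborel. F r\<bar> \<le> (\<integral>\<^sup>+r. indicator {a..s} r * ennreal \<bar>F r\<bar> \<partial>lborel)"
      using sol[OF s] by (intro ennreal_abs_set_integral_le) simp
    also have "\<dots> \<le> \<Phi>"
      unfolding \<Phi>_def using s by (intro nn_integral_mono) (simp split: split_indicator)
    finally have "\<bar>LINT r:{a..s}|lborel. F r\<bar> \<le> enn2real \<Phi>"
      using enn2real_mono[OF _ \<Phi>_fin] by fastforce
    then have "\<bar>Yf s - y\<bar> \<le> enn2real \<Phi> + K\<^sub>\<beta>"
      using sol[OF s] K\<^sub>\<beta>[OF s] by linarith
    then show ?thesis
      by (metis abs_ge_zero power2_abs power_mono)
  qed
  have "(\<integral>\<^sup>+s. indicator {a..b} s * ennreal ((Yf s - y)\<^sup>2) \<partial>lborel)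
      \<le> (\<integral>\<^sup>+s. ennreal ((enn2real \<Phi> + K\<^sub>\<beta>)\<^sup>2) * indicator {a..b} s \<partial>lborel)"
    using bound by (intro nn_integral_mono) (simp add: ennreal_leI split: split_indicator)
  also have "\<dots> < \<top>"
    using True by (simp add: nn_integral_cmult_indicator ennreal_mult_less_top)
  finally show ?thesis .
qed simp

lemma integral_equation_pointwise_bound:
  fixes F g Yf \<beta> :: "real \<Rightarrow> real"
  assumes \<mu>: "0 \<le> \<mu>" and g_meas: "g \<in> borel_measurable borel"
    and Yf_meas: "(\<lambda>s. indicator {a..b} s * Yf s) \<in> borel_measurable borel"
    and Lip: "\<And>r. r \<in> {a..b} \<Longrightarrow> \<bar>F r - g r\<bar> \<le> \<mu> * \<bar>Yf r - y\<bar>"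
    and sol: "\<And>s. s \<in> {a..b} \<Longrightarrow> set_integrable lborel {a..s} F \<and>
                 Yf s = y - (LINT r:{a..s}|lborel. F r) + \<beta> s"
    and s: "s \<in> {a..b}"
  shows "ennreal \<bar>Yf s - y\<bar>
    \<le> (\<integral>\<^sup>+r. indicator {a..b} r * ennreal \<bar>g r\<bar> \<partial>lborel)
      + ennreal \<mu> * (\<integral>\<^sup>+r. indicator {a..b} r * ennreal \<bar>Yf r - y\<bar> \<partial>lborel) + ennreal \<bar>\<beta> s\<bar>"
proof -
  have "\<bar>Yf s - y\<bar> \<le> \<bar>LINT r:{a..s}|lborel. F r\<bar> + \<bar>\<beta> s\<bar>"
    using sol[OF s] by auto
  then have "ennreal \<bar>Yf s - y\<bar> \<le> ennreal \<bar>LINT r:{a..s}|lborel. F r\<bar> + ennreal \<bar>\<beta> s\<bar>"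
    by (metis abs_ge_zero ennreal_leI ennreal_plus)
  also have "ennreal \<bar>LINT r:{a..s}|lborel. F r\<bar> \<le> (\<integral>\<^sup>+r. indicator {a..s} r * ennreal \<bar>F r\<bar> \<partial>lborel)"
    using sol[OF s] by (intro ennreal_abs_set_integral_le) simp
  also have "\<dots> \<le> (\<integral>\<^sup>+r. indicator {a..b} r * ennreal \<bar>g r\<bar> + ennreal \<mu> * (indicator {a..b} r * ennreal \<bar>Yf r - y\<bar>) \<partial>lborel)"
  proof (intro nn_integral_mono)
    fix r
    have "\<bar>F r\<bar> \<le> \<bar>g r\<bar> + \<mu> * \<bar>Yf r - y\<bar>" if "r \<in> {a..b}"
      using Lip[OF that] by linarith
    then show "indicator {a..s} r * ennreal \<bar>F r\<bar>
        \<le> indicator {a..b} r * ennreal \<bar>g r\<bar> + ennreal \<mu> * (indicator {a..b} r * ennreal \<bar>Yf r - y\<bar>)"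
      using s \<mu> by (auto simp: ennreal_leI split: split_indicator simp flip: ennreal_plus ennreal_mult)
  qed
  also have "\<dots> = (\<integral>\<^sup>+r. indicator {a..b} r * ennreal \<bar>g r\<bar> \<partial>lborel)
      + ennreal \<mu> * (\<integral>\<^sup>+r. indicator {a..b} r * ennreal \<bar>Yf r - y\<bar> \<partial>lborel)"
    using g_meas borel_measurable_indicator_ennreal_comp[OF _ Yf_meas, of "\<lambda>x. \<bar>x - y\<bar>"]
    by (simp add: nn_integral_add nn_integral_cmult measurable_lborel2)
  finally show ?thesis
    by (simp add: add_mono)
qed

lemma integral_equation_L2_bound:
  fixes F g Yf \<beta> :: "real \<Rightarrow> real" and a h \<mu> y :: real
  assumes h: "0 < h" and \<mu>: "0 \<le> \<mu>" and small: "\<mu>\<^sup>2 * h\<^sup>2 \<le> 1/6"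
    and g_meas: "g \<in> borel_measurable borel"
    and Yf_meas: "(\<lambda>s. indicator {a..a+h} s * Yf s) \<in> borel_measurable borel"
    and \<beta>_cont: "continuous_on {a..a+h} \<beta>"
    and Lip: "\<And>r. r \<in> {a..a+h} \<Longrightarrow> \<bar>F r - g r\<bar> \<le> \<mu> * \<bar>Yf r - y\<bar>"
    and sol: "\<And>s. s \<in> {a..a+h} \<Longrightarrow> set_integrable lborel {a..s} F \<and>
                 Yf s = y - (LINT r:{a..s}|lborel. F r) + \<beta> s"
  shows "(\<integral>\<^sup>+s. indicator {a..a+h} s * ennreal ((Yf s - y)\<^sup>2) \<partial>lborel)
     \<le> ennreal (6 * h\<^sup>2) * (\<integral>\<^sup>+s. indicator {a..a+h} s * ennreal ((g s)\<^sup>2) \<partial>lborel)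
       + 6 * (\<integral>\<^sup>+s. indicator {a..a+h} s * ennreal ((\<beta> s)\<^sup>2) \<partial>lborel)"
proof -
  define I where "I = {a..a+h}"
  define U where "U = (\<integral>\<^sup>+s. indicator I s * ennreal ((Yf s - y)\<^sup>2) \<partial>lborel)"
  define G where "G = (\<integral>\<^sup>+s. indicator I s * ennreal ((g s)\<^sup>2) \<partial>lborel)"
  define W where "W = (\<integral>\<^sup>+s. indicator I s * ennreal ((\<beta> s)\<^sup>2) \<partial>lborel)"
  define A where "A = (\<integral>\<^sup>+s. indicator I s * ennreal \<bar>g s\<bar> \<partial>lborel)"
  define V where "V = (\<integral>\<^sup>+s. indicator I s * ennreal \<bar>Yf s - y\<bar> \<partial>lborel)"
  have U_fin: "U < \<top>"
    unfolding U_def I_def by (rule integral_equation_L2_finite[OF \<beta>_cont sol])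
  have pointwise: "ennreal \<bar>Yf s - y\<bar> \<le> A + ennreal \<mu> * V + ennreal \<bar>\<beta> s\<bar>" if "s \<in> I" for s
    using integral_equation_pointwise_bound[OF \<mu> g_meas Yf_meas Lip sol] that
    unfolding A_def V_def I_def by blast
  have A_sq: "A\<^sup>2 \<le> ennreal h * G"
    using nn_integral_Icc_Cauchy_Schwarz[of a "a+h" g] g_meas h
    by (simp add: A_def G_def I_def measurable_lborel2)
  have V_sq: "V\<^sup>2 \<le> ennreal h * U"
    using nn_integral_Icc_Cauchy_Schwarz[of a "a+h" "\<lambda>s. Yf s - y"] h
      borel_measurable_indicator_ennreal_comp[OF _ Yf_meas, of "\<lambda>x. \<bar>x - y\<bar>"]
    by (simp add: V_def U_def I_def)
  have W_meas: "(\<lambda>s. indicator I s * ennreal ((\<beta> s)\<^sup>2)) \<in> borel_measurable lborel"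
    using borel_measurable_indicator_norm_square[OF \<beta>_cont] by (simp add: I_def measurable_lborel2)
  have "U \<le> (\<integral>\<^sup>+s. 3 * (A\<^sup>2 + (ennreal \<mu> * V)\<^sup>2) * indicator I s + 3 * (indicator I s * ennreal ((\<beta> s)\<^sup>2)) \<partial>lborel)"
    unfolding U_def
  proof (intro nn_integral_mono)
    fix s
    show "indicator I s * ennreal ((Yf s - y)\<^sup>2)
        \<le> 3 * (A\<^sup>2 + (ennreal \<mu> * V)\<^sup>2) * indicator I s + 3 * (indicator I s * ennreal ((\<beta> s)\<^sup>2))"
    proof (cases "s \<in> I")
      case True
      have "ennreal ((Yf s - y)\<^sup>2) = (ennreal \<bar>Yf s - y\<bar>)\<^sup>2"
        by (simp add: ennreal_power)
      also have "\<dots> \<le> (A + ennreal \<mu> * V + ennreal \<bar>\<beta> s\<bar>)\<^sup>2"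
        using pointwise[OF True] by (rule power_mono) simp
      also have "\<dots> \<le> 3 * (A\<^sup>2 + (ennreal \<mu> * V)\<^sup>2 + (ennreal \<bar>\<beta> s\<bar>)\<^sup>2)"
        by (rule ennreal_square_sum3_le)
      finally show ?thesis
        using True by (simp add: ennreal_power distrib_left)
    qed simp
  qed
  also have "\<dots> = 3 * (A\<^sup>2 + (ennreal \<mu> * V)\<^sup>2) * ennreal h + 3 * W"
    using W_meas h
    by (simp add: nn_integral_add nn_integral_cmult nn_integral_cmult_indicator W_def I_def)
  also have "\<dots> \<le> 3 * (ennreal h * G + ennreal (\<mu>\<^sup>2) * (ennreal h * U)) * ennreal h + 3 * W"
    using A_sq V_sq \<mu>
    by (intro add_mono mult_right_mono mult_left_mono order_refl)
       (auto simp: power_mult_distrib ennreal_power intro!: mult_left_mono)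
  also have "\<dots> = (ennreal (3 * h\<^sup>2) * G + 3 * W) + ennreal (3 * (\<mu>\<^sup>2 * h\<^sup>2)) * U"
    using h \<mu> by (simp add: ennreal_mult power2_eq_square algebra_simps)
  finally have "U \<le> 2 * (ennreal (3 * h\<^sup>2) * G + 3 * W)"
    using U_fin small by (intro ennreal_absorb) auto
  also have "\<dots> = ennreal (6 * h\<^sup>2) * G + 6 * W"
    by (simp add: ennreal_mult' algebra_simps)
  finally show ?thesis
    by (simp add: U_def G_def W_def I_def)
qed

lemma integral_equation_cell_bound:
  fixes \<phi> :: "real \<Rightarrow> real \<Rightarrow> real" and Yt :: "real \<Rightarrow> real"
    and b :: "real \<Rightarrow> 'v::euclidean_space" and z :: 'v
  assumes h: "0 < h" and \<mu>: "0 \<le> \<mu>" and small: "\<mu>\<^sup>2 * h\<^sup>2 \<le> 1/6" and cell: "{t..t+h} \<subseteq> {0..T}"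
    and \<phi>_meas: "(\<lambda>s. indicator {0..T} s * \<phi> s y) \<in> borel_measurable borel"
    and Yt_meas: "(\<lambda>s. indicator {t..t+h} s * Yt s) \<in> borel_measurable borel"
    and b_cont: "continuous_on {t..t+h} b"
    and Lip: "\<And>s x. s \<in> {0..T} \<Longrightarrow> \<bar>\<phi> s x - \<phi> s y\<bar> \<le> \<mu> * \<bar>x - y\<bar>"
    and sol: "\<And>s. s \<in> {t..t+h} \<Longrightarrow> set_integrable lborel {t..s} (\<lambda>r. \<phi> r (Yt r)) \<and>
                 Yt s = y - (LINT r:{t..s}|lborel. \<phi> r (Yt r)) + z \<bullet> (b s - b t)"
  shows "(\<integral>\<^sup>+s. indicator {t..t+h} s * ennreal (\<mu>\<^sup>2 * (Yt s - y)\<^sup>2) \<partial>lborel)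
    \<le> ennreal (6 * \<mu>\<^sup>2 * h\<^sup>2) * (\<integral>\<^sup>+s. indicator {0..T} s * ennreal ((\<phi> s y)\<^sup>2) \<partial>lborel)
      + ennreal (6 * \<mu>\<^sup>2 * (norm z)\<^sup>2) *
          (\<integral>\<^sup>+s. indicator {t..t+h} s * ennreal ((norm (b s - b t))\<^sup>2) \<partial>lborel)"
proof -
  define I where "I = {t..t+h}"
  define g where "g s = indicator {0..T} s * \<phi> s y" for s
  define G where "G = (\<integral>\<^sup>+s. indicator {0..T} s * ennreal ((\<phi> s y)\<^sup>2) \<partial>lborel)"
  define W where "W = (\<integral>\<^sup>+s. indicator I s * ennreal ((norm (b s - b t))\<^sup>2) \<partial>lborel)"
  have a_priori: "(\<integral>\<^sup>+s. indicator I s * ennreal ((Yt s - y)\<^sup>2) \<partial>lborel)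
      \<le> ennreal (6 * h\<^sup>2) * (\<integral>\<^sup>+s. indicator I s * ennreal ((g s)\<^sup>2) \<partial>lborel)
        + 6 * (\<integral>\<^sup>+s. indicator I s * ennreal ((z \<bullet> (b s - b t))\<^sup>2) \<partial>lborel)"
    unfolding I_def
  proof (rule integral_equation_L2_bound[OF h \<mu> small _ Yt_meas])
    show "g \<in> borel_measurable borel"
      using \<phi>_meas by (simp add: g_def[abs_def])
    show "continuous_on {t..t+h} (\<lambda>s. z \<bullet> (b s - b t))"
      using b_cont by (intro continuous_intros)
    show "\<bar>\<phi> r (Yt r) - g r\<bar> \<le> \<mu> * \<bar>Yt r - y\<bar>" if "r \<in> {t..t+h}" for r
      using that cell Lip[of r "Yt r"] by (auto simp: g_def)
  qed (use sol in auto)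
  have G_le: "(\<integral>\<^sup>+s. indicator I s * ennreal ((g s)\<^sup>2) \<partial>lborel) \<le> G"
    unfolding G_def using cell
    by (intro nn_integral_mono) (auto simp: I_def g_def split: split_indicator)
  have W_le: "(\<integral>\<^sup>+s. indicator I s * ennreal ((z \<bullet> (b s - b t))\<^sup>2) \<partial>lborel)
      \<le> ennreal ((norm z)\<^sup>2) * W"
    unfolding I_def W_def using b_cont by (intro nn_integral_indicator_inner_square_le continuous_intros)
  have "(\<integral>\<^sup>+s. indicator I s * ennreal ((Yt s - y)\<^sup>2) \<partial>lborel)
      \<le> ennreal (6 * h\<^sup>2) * G + 6 * (ennreal ((norm z)\<^sup>2) * W)"
    using G_le W_le by (intro order_trans[OF a_priori] add_mono mult_left_mono) auto
  moreover have "(\<integral>\<^sup>+s. indicator I s * ennreal (\<mu>\<^sup>2 * (Yt s - y)\<^sup>2) \<partial>lborel)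
      = ennreal (\<mu>\<^sup>2) * (\<integral>\<^sup>+s. indicator I s * ennreal ((Yt s - y)\<^sup>2) \<partial>lborel)"
    using borel_measurable_indicator_ennreal_comp[OF _ Yt_meas, of "\<lambda>x. (x - y)\<^sup>2"]
    by (subst nn_integral_cmult[symmetric])
       (auto intro!: nn_integral_cong simp: ennreal_mult measurable_lborel2 I_def mult_ac)
  ultimately have "(\<integral>\<^sup>+s. indicator I s * ennreal (\<mu>\<^sup>2 * (Yt s - y)\<^sup>2) \<partial>lborel)
      \<le> ennreal (\<mu>\<^sup>2) * (ennreal (6 * h\<^sup>2) * G + 6 * (ennreal ((norm z)\<^sup>2) * W))"
    by (simp add: mult_left_mono)
  also have "\<dots> = ennreal (6 * \<mu>\<^sup>2 * h\<^sup>2) * G + ennreal (6 * \<mu>\<^sup>2 * (norm z)\<^sup>2) * W"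
    by (simp add: ennreal_mult' distrib_left mult_ac)
  finally show ?thesis
    by (simp add: I_def G_def W_def)
qed

section \<open>Brownian increments\<close>

lemma nn_integral_square_normal:
  assumes X: "distributed M lborel X (normal_density 0 \<sigma>)" and \<sigma>: "0 < \<sigma>"
  shows "(\<integral>\<^sup>+\<omega>. ennreal ((X \<omega>)\<^sup>2) \<partial>M) = ennreal (\<sigma>\<^sup>2)"
proof -
  have moment: "has_bochner_integral lborel (\<lambda>x. normal_density 0 \<sigma> x * (x - 0) ^ (2 * 1))
      (fact (2 * 1) / ((2 / \<sigma>\<^sup>2) ^ 1 * fact 1))"
    using normal_moment_even[OF \<sigma>, of 0 1] .
  have "(\<integral>\<^sup>+\<omega>. ennreal ((X \<omega>)\<^sup>2) \<partial>M)
      = (\<integral>\<^sup>+x. ennreal (normal_density 0 \<sigma> x) * ennreal (x\<^sup>2) \<partial>lborel)"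
    using X by (intro distributed_nn_integral[symmetric]) auto
  also have "\<dots> = (\<integral>\<^sup>+x. ennreal (normal_density 0 \<sigma> x * (x - 0) ^ (2 * 1)) \<partial>lborel)"
    by (intro nn_integral_cong) (simp add: ennreal_mult normal_density_nonneg)
  also have "\<dots> = ennreal (fact (2 * 1) / ((2 / \<sigma>\<^sup>2) ^ 1 * fact 1))"
    using moment by (subst nn_integral_eq_integral)
      (auto simp: has_bochner_integral_iff normal_density_nonneg)
  finally show ?thesis
    using \<sigma> by simp
qed

lemma brownian_increment_second_moment:
  fixes B :: "real \<Rightarrow> 'a \<Rightarrow> real^'d"
  assumes BM: "brownian_motion M B" and t: "0 \<le> t" "t \<le> s"
  shows "(\<integral>\<^sup>+\<omega>. ennreal ((norm (B s \<omega> - B t \<omega>))\<^sup>2) \<partial>M) = ennreal (real CARD('d) * (s - t))"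
proof (cases "t = s")
  case False
  then have ts: "t < s" using t by simp
  have normal: "distributed M lborel (\<lambda>\<omega>. (B s \<omega> - B t \<omega>) $ j) (normal_density 0 (sqrt (s - t)))" for j
    using BM ts t unfolding brownian_motion_def by auto
  have "(\<integral>\<^sup>+\<omega>. ennreal ((norm (B s \<omega> - B t \<omega>))\<^sup>2) \<partial>M)
      = (\<integral>\<^sup>+\<omega>. (\<Sum>j\<in>UNIV. ennreal (((B s \<omega> - B t \<omega>) $ j)\<^sup>2)) \<partial>M)"
    by (intro nn_integral_cong)
       (simp add: norm_vec_def L2_set_def sum_nonneg flip: sum_ennreal)
  also have "\<dots> = (\<Sum>j\<in>UNIV. (\<integral>\<^sup>+\<omega>. ennreal (((B s \<omega> - B t \<omega>) $ j)\<^sup>2) \<partial>M))"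
    using distributed_measurable[OF normal] by (intro nn_integral_sum) simp
  also have "\<dots> = (\<Sum>j\<in>(UNIV::'d set). ennreal (s - t))"
  proof -
    have "(\<integral>\<^sup>+\<omega>. ennreal (((B s \<omega> - B t \<omega>) $ j)\<^sup>2) \<partial>M) = ennreal (s - t)" for j
      using nn_integral_square_normal[OF normal[of j]] ts by simp
    then show ?thesis
      by (simp only:)
  qed
  finally show ?thesis
    using ts by (simp add: ennreal_mult ennreal_of_nat_eq_real_of_nat)
qed simp

lemma dyadic_floor_tendsto:
  fixes s :: real
  shows "(\<lambda>k. real_of_int \<lfloor>s * 2 ^ k\<rfloor> / 2 ^ k) \<longlonglongrightarrow> s"
proof (rule tendsto_sandwich[of "\<lambda>k. s - (1/2) ^ k" _ _ "\<lambda>k. s"])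
  show "\<forall>\<^sub>F k in sequentially. s - (1/2) ^ k \<le> real_of_int \<lfloor>s * 2 ^ k\<rfloor> / 2 ^ k"
  proof (intro always_eventually allI)
    fix k :: nat
    have "s * 2 ^ k - 1 \<le> real_of_int \<lfloor>s * 2 ^ k\<rfloor>"
      by linarith
    then have "(s * 2 ^ k - 1) / 2 ^ k \<le> real_of_int \<lfloor>s * 2 ^ k\<rfloor> / 2 ^ k"
      by (intro divide_right_mono) auto
    then show "s - (1/2) ^ k \<le> real_of_int \<lfloor>s * 2 ^ k\<rfloor> / 2 ^ k"
      by (simp add: field_simps power_one_over)
  qed
  show "\<forall>\<^sub>F k in sequentially. real_of_int \<lfloor>s * 2 ^ k\<rfloor> / 2 ^ k \<le> s"
    by (intro always_eventually allI) (simp add: divide_le_eq)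
  have "(\<lambda>k. s - (1/2::real) ^ k) \<longlonglongrightarrow> s - 0"
    by (intro tendsto_diff tendsto_const LIMSEQ_power_zero) auto
  then show "(\<lambda>k. s - (1/2::real) ^ k) \<longlonglongrightarrow> s"
    by simp
qed simp

(* Paths are only assumed continuous for nonnegative times, hence the clamp max 0 s. *)
lemma brownian_motion_pair_measurable:
  fixes B :: "real \<Rightarrow> 'a \<Rightarrow> real^'d"
  assumes BM: "brownian_motion M B"
  shows "(\<lambda>(s, \<omega>). B (max 0 s) \<omega>) \<in> borel_measurable (lborel \<Otimes>\<^sub>M M)"
  unfolding split_beta'
proof (rule borel_measurable_LIMSEQ_metric[where
      f="\<lambda>k p. B (max 0 (real_of_int \<lfloor>fst p * (2::real) ^ k\<rfloor> / 2 ^ k)) (snd p)"])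
  have [measurable]: "\<And>r. B r \<in> borel_measurable M"
    using BM unfolding brownian_motion_def by auto
  fix k :: nat
  show "(\<lambda>p. B (max 0 (real_of_int \<lfloor>fst p * (2::real) ^ k\<rfloor> / 2 ^ k)) (snd p))
      \<in> borel_measurable (lborel \<Otimes>\<^sub>M M)"
  proof (rule measurable_compose_countable[where f="\<lambda>i p. B (max 0 (real_of_int i / 2 ^ k)) (snd p)"
        and g="\<lambda>p. \<lfloor>fst p * (2::real) ^ k\<rfloor>"])
    show "(\<lambda>p. B (max 0 (real_of_int i / 2 ^ k)) (snd p)) \<in> borel_measurable (lborel \<Otimes>\<^sub>M M)" for i :: int
      by measurable
    show "(\<lambda>p. \<lfloor>fst p * (2::real) ^ k\<rfloor>) \<in> measurable (lborel \<Otimes>\<^sub>M M) (count_space UNIV)"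
      using measurable_compose[OF _ measurable_real_floor, of "\<lambda>p. fst p * (2::real) ^ k"] by simp
  qed
next
  fix p :: "real \<times> 'a" assume "p \<in> space (lborel \<Otimes>\<^sub>M M)"
  then have cont: "continuous_on {0..} (\<lambda>r. B r (snd p))"
    using BM unfolding brownian_motion_def by (auto simp: space_pair_measure)
  have "(\<lambda>k. max 0 (real_of_int \<lfloor>fst p * 2 ^ k\<rfloor> / 2 ^ k)) \<longlonglongrightarrow> max 0 (fst p)"
    by (intro tendsto_max tendsto_const dyadic_floor_tendsto)
  then show "(\<lambda>k. B (max 0 (real_of_int \<lfloor>fst p * 2 ^ k\<rfloor> / 2 ^ k)) (snd p))
      \<longlonglongrightarrow> B (max 0 (fst p)) (snd p)"
    by (rule continuous_on_tendsto_compose[OF cont]) auto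
qed

lemma brownian_increment_pair_measurable:
  fixes B :: "real \<Rightarrow> 'a \<Rightarrow> real^'d"
  assumes BM: "brownian_motion M B" and t: "0 \<le> t"
  shows "(\<lambda>(s, \<omega>). indicator {t..t+h} s * ennreal ((norm (B s \<omega> - B t \<omega>))\<^sup>2))
           \<in> borel_measurable (lborel \<Otimes>\<^sub>M M)"
proof -
  have [measurable]: "B t \<in> borel_measurable M"
    using BM unfolding brownian_motion_def by auto
  have [measurable]: "(\<lambda>(s, \<omega>). B (max 0 s) \<omega>) \<in> borel_measurable (lborel \<Otimes>\<^sub>M M)"
    using brownian_motion_pair_measurable[OF BM] .
  have "(\<lambda>(s, \<omega>). indicator {t..t+h} s * ennreal ((norm (B (max 0 s) \<omega> - B t \<omega>))\<^sup>2))
           \<in> borel_measurable (lborel \<Otimes>\<^sub>M M)"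
    by measurable
  then show ?thesis
    by (rule measurable_cong[THEN iffD1, rotated]) (use t in \<open>auto simp: max_def indicator_def\<close>)
qed

lemma brownian_increment_path_L2_measurable:
  fixes B :: "real \<Rightarrow> 'a \<Rightarrow> real^'d"
  assumes BM: "brownian_motion M B" and t: "0 \<le> t"
  shows "(\<lambda>\<omega>. \<integral>\<^sup>+s. indicator {t..t+h} s * ennreal ((norm (B s \<omega> - B t \<omega>))\<^sup>2) \<partial>lborel)
           \<in> borel_measurable M"
  using brownian_increment_pair_measurable[OF BM t] by measurable

lemma brownian_increment_path_L2_expectation:
  fixes B :: "real \<Rightarrow> 'a \<Rightarrow> real^'d"
  assumes BM: "brownian_motion M B" and t: "0 \<le> t" and h: "0 \<le> h"
  shows "(\<integral>\<^sup>+\<omega>. (\<integral>\<^sup>+s. indicator {t..t+h} s * ennreal ((norm (B s \<omega> - B t \<omega>))\<^sup>2) \<partial>lborel) \<partial>M)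
           \<le> ennreal (real CARD('d) * h\<^sup>2)"
proof -
  interpret M: prob_space M
    using BM unfolding brownian_motion_def by auto
  interpret pair_sigma_finite lborel M
    by (simp add: pair_sigma_finite_def lborel.sigma_finite_measure_axioms M.sigma_finite_measure_axioms)
  have "(\<integral>\<^sup>+\<omega>. (\<integral>\<^sup>+s. indicator {t..t+h} s * ennreal ((norm (B s \<omega> - B t \<omega>))\<^sup>2) \<partial>lborel) \<partial>M)
      = (\<integral>\<^sup>+s. (\<integral>\<^sup>+\<omega>. indicator {t..t+h} s * ennreal ((norm (B s \<omega> - B t \<omega>))\<^sup>2) \<partial>M) \<partial>lborel)"
    using Fubini'[OF brownian_increment_pair_measurable[OF BM t]] by simp
  also have "\<dots> \<le> (\<integral>\<^sup>+s. ennreal (real CARD('d) * h) * indicator {t..t+h} s \<partial>lborel)"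
  proof (intro nn_integral_mono)
    fix s
    show "(\<integral>\<^sup>+\<omega>. indicator {t..t+h} s * ennreal ((norm (B s \<omega> - B t \<omega>))\<^sup>2) \<partial>M)
        \<le> ennreal (real CARD('d) * h) * indicator {t..t+h} s"
    proof (cases "s \<in> {t..t+h}")
      case True
      then have "(\<integral>\<^sup>+\<omega>. indicator {t..t+h} s * ennreal ((norm (B s \<omega> - B t \<omega>))\<^sup>2) \<partial>M)
          = ennreal (real CARD('d) * (s - t))"
        using t by (simp add: brownian_increment_second_moment[OF BM])
      also have "\<dots> \<le> ennreal (real CARD('d) * h)"
        using True by (intro ennreal_leI mult_left_mono) auto
      finally show ?thesis
        using True by simp
    qed simp
  qed
  also have "\<dots> = ennreal (real CARD('d) * h\<^sup>2)"
    using h by (subst nn_integral_cmult_indicator) (auto simp: ennreal_mult' power2_eq_square mult.assoc)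
  finally show ?thesis .
qed

section \<open>The dyadic approximation\<close>

lemma dyad_Suc: "dyad T n (Suc i) = dyad T n i + T / 2 ^ n"
  by (simp add: dyad_def field_simps)

lemma dyad_nonneg: "0 \<le> T \<Longrightarrow> 0 \<le> dyad T n i"
  by (simp add: dyad_def)

lemma dyad_le:
  assumes "0 \<le> T" "i \<le> 2 ^ n"
  shows "dyad T n i \<le> T"
proof -
  have "real i \<le> 2 ^ n"
    using assms(2) by (metis of_nat_le_iff of_nat_numeral of_nat_power)
  then have "real i * T \<le> 2 ^ n * T"
    using assms(1) by (rule mult_right_mono)
  then show ?thesis
    by (simp add: dyad_def divide_le_eq mult_ac)
qed

lemma dyadic_cell_unique:
  assumes T: "0 < T"
    and "s \<in> {dyad T n i..<dyad T n (Suc i)}" "s \<in> {dyad T n k..<dyad T n (Suc k)}"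
  shows "i = k"
proof -
  have "dyad T n i < dyad T n (Suc k)" "dyad T n k < dyad T n (Suc i)"
    using assms(2,3) by auto
  then have "real i < real (Suc k)" "real k < real (Suc i)"
    using T by (auto simp: dyad_def divide_less_cancel mult_less_cancel_right)
  then show ?thesis
    by linarith
qed

lemma dyadic_cell_exists:
  assumes T: "0 < T" and s: "0 \<le> s" "s < T"
  obtains k where "k < 2 ^ n" "s \<in> {dyad T n k..<dyad T n (Suc k)}"
proof
  define x where "x = s * 2 ^ n / T"
  have x: "0 \<le> x" "x < 2 ^ n"
    using T s by (auto simp: x_def divide_less_eq)
  show "nat \<lfloor>x\<rfloor> < 2 ^ n"
    using x by (simp add: nat_less_iff floor_less_iff)
  have "real (nat \<lfloor>x\<rfloor>) \<le> x" "x < real (nat \<lfloor>x\<rfloor>) + 1"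
    using x by linarith+
  then show "s \<in> {dyad T n (nat \<lfloor>x\<rfloor>)..<dyad T n (Suc (nat \<lfloor>x\<rfloor>))}"
    using T by (auto simp: dyad_def x_def field_simps)
qed

lemma fn_approx_on_cell:
  assumes T: "0 < T" and k: "k < 2 ^ n" "s \<in> {dyad T n k..<dyad T n (Suc k)}"
  shows "fn_approx f Y T n \<omega> s y z = f \<omega> s (Y (dyad T n k) y z s \<omega>) z"
proof -
  have "f \<omega> s (Y (dyad T n i) y z s \<omega>) z * indicator {dyad T n i..<dyad T n (Suc i)} s
      = (if i = k then f \<omega> s (Y (dyad T n k) y z s \<omega>) z else 0)" for i
  proof (cases "i = k")
    case False
    then have "s \<notin> {dyad T n i..<dyad T n (Suc i)}"
      using dyadic_cell_unique[OF T _ k(2)] by blast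
    then show ?thesis
      using False by simp
  qed (use k in simp)
  then show ?thesis
    using k by (simp add: fn_approx_def)
qed

(* The excluded point T lies in no half-open cell, so there fn_approx vanishes. *)
lemma fn_approx_error_le_cells:
  assumes T: "0 < T" and s: "s \<noteq> T"
    and Lip: "\<And>t x. t \<in> {0..T} \<Longrightarrow> \<bar>f \<omega> t x z - f \<omega> t y z\<bar> \<le> \<mu> * \<bar>x - y\<bar>"
  shows "indicator {0..T} s * ennreal ((fn_approx f Y T n \<omega> s y z - f \<omega> s y z)\<^sup>2)
      \<le> (\<Sum>i<2 ^ n. indicator {dyad T n i..dyad T n (Suc i)} s *
            ennreal (\<mu>\<^sup>2 * (Y (dyad T n i) y z s \<omega> - y)\<^sup>2))"
proof (cases "s \<in> {0..T}")
  case True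
  then obtain k where k: "k < 2 ^ n" "s \<in> {dyad T n k..<dyad T n (Suc k)}"
    using dyadic_cell_exists[OF T, of s n] s by auto
  have "\<bar>fn_approx f Y T n \<omega> s y z - f \<omega> s y z\<bar> \<le> \<mu> * \<bar>Y (dyad T n k) y z s \<omega> - y\<bar>"
    using Lip[OF True] by (simp add: fn_approx_on_cell[OF T k])
  then have "\<bar>fn_approx f Y T n \<omega> s y z - f \<omega> s y z\<bar>\<^sup>2 \<le> (\<mu> * \<bar>Y (dyad T n k) y z s \<omega> - y\<bar>)\<^sup>2"
    by (intro power_mono) auto
  then have "(fn_approx f Y T n \<omega> s y z - f \<omega> s y z)\<^sup>2 \<le> \<mu>\<^sup>2 * (Y (dyad T n k) y z s \<omega> - y)\<^sup>2"
    by (simp add: power_mult_distrib)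
  then have "indicator {0..T} s * ennreal ((fn_approx f Y T n \<omega> s y z - f \<omega> s y z)\<^sup>2)
      \<le> indicator {dyad T n k..dyad T n (Suc k)} s * ennreal (\<mu>\<^sup>2 * (Y (dyad T n k) y z s \<omega> - y)\<^sup>2)"
    using True k by (simp add: ennreal_leI)
  also have "\<dots> \<le> (\<Sum>i<2 ^ n. indicator {dyad T n i..dyad T n (Suc i)} s *
            ennreal (\<mu>\<^sup>2 * (Y (dyad T n i) y z s \<omega> - y)\<^sup>2))"
    using k by (intro member_le_sum) auto
  finally show ?thesis .
qed simp

lemma fn_approx_error_pathwise_bound:
  fixes f :: "'a \<Rightarrow> real \<Rightarrow> real \<Rightarrow> real^'d \<Rightarrow> real"
    and Y :: "real \<Rightarrow> real \<Rightarrow> real^'d \<Rightarrow> real \<Rightarrow> 'a \<Rightarrow> real"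
    and B :: "real \<Rightarrow> 'a \<Rightarrow> real^'d"
  assumes T: "0 < T" and \<mu>: "0 \<le> \<mu>" and small: "\<mu>\<^sup>2 * (T / 2 ^ n)\<^sup>2 \<le> 1/6"
    and f_meas: "(\<lambda>s. indicator {0..T} s * f \<omega> s y z) \<in> borel_measurable borel"
    and Y_meas: "\<And>i. i < 2 ^ n \<Longrightarrow>
      (\<lambda>s. indicator {dyad T n i..T} s * Y (dyad T n i) y z s \<omega>) \<in> borel_measurable borel"
    and B_cont: "continuous_on {0..} (\<lambda>s. B s \<omega>)"
    and Lip: "\<And>s x. s \<in> {0..T} \<Longrightarrow> \<bar>f \<omega> s x z - f \<omega> s y z\<bar> \<le> \<mu> * \<bar>x - y\<bar>"
    and sol: "\<And>i s. i < 2 ^ n \<Longrightarrow> s \<in> {dyad T n i..T} \<Longrightarrow>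
      set_integrable lborel {dyad T n i..s} (\<lambda>r. f \<omega> r (Y (dyad T n i) y z r \<omega>) z) \<and>
      Y (dyad T n i) y z s \<omega> = y - (LINT r:{dyad T n i..s}|lborel. f \<omega> r (Y (dyad T n i) y z r \<omega>) z)
                                + z \<bullet> (B s \<omega> - B (dyad T n i) \<omega>)"
  shows "(\<integral>\<^sup>+s. indicator {0..T} s * ennreal ((fn_approx f Y T n \<omega> s y z - f \<omega> s y z)\<^sup>2) \<partial>lborel)
    \<le> (\<Sum>i<2 ^ n. ennreal (6 * \<mu>\<^sup>2 * (T / 2 ^ n)\<^sup>2) *
            (\<integral>\<^sup>+s. indicator {0..T} s * ennreal ((f \<omega> s y z)\<^sup>2) \<partial>lborel)
        + ennreal (6 * \<mu>\<^sup>2 * (norm z)\<^sup>2) *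
            (\<integral>\<^sup>+s. indicator {dyad T n i..dyad T n i + T / 2 ^ n} s *
               ennreal ((norm (B s \<omega> - B (dyad T n i) \<omega>))\<^sup>2) \<partial>lborel))"
proof -
  define h where "h = T / 2 ^ n"
  define cell where "cell i = {dyad T n i..dyad T n i + h}" for i
  have h: "0 < h"
    using T by (simp add: h_def)
  have cell_sub: "cell i \<subseteq> {0..T}" "cell i \<subseteq> {dyad T n i..T}" if "i < 2 ^ n" for i
    using dyad_nonneg[of T n i] dyad_le[of T "Suc i" n] T that by (auto simp: cell_def dyad_Suc h_def)
  have Y_cell_meas: "(\<lambda>s. indicator (cell i) s * Y (dyad T n i) y z s \<omega>) \<in> borel_measurable borel"
    if "i < 2 ^ n" for i
  proof -
    have "(\<lambda>s. indicator (cell i) s * (indicator {dyad T n i..T} s * Y (dyad T n i) y z s \<omega>))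
        \<in> borel_measurable borel"
      using Y_meas[OF that] by (simp add: cell_def)
    then show ?thesis
      by (rule measurable_cong[THEN iffD1, rotated])
         (use cell_sub(2)[OF that] in \<open>auto split: split_indicator\<close>)
  qed
  have "(\<integral>\<^sup>+s. indicator {0..T} s * ennreal ((fn_approx f Y T n \<omega> s y z - f \<omega> s y z)\<^sup>2) \<partial>lborel)
      \<le> (\<integral>\<^sup>+s. (\<Sum>i<2 ^ n. indicator (cell i) s * ennreal (\<mu>\<^sup>2 * (Y (dyad T n i) y z s \<omega> - y)\<^sup>2)) \<partial>lborel)"
    using AE_lborel_singleton[of T]
    by (intro nn_integral_mono_AE, eventually_elim)
       (use fn_approx_error_le_cells[where f=f and \<omega>=\<omega> and y=y and z=z and \<mu>=\<mu> and n=n and Y=Y,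
          OF T _ Lip] in \<open>simp add: cell_def dyad_Suc h_def\<close>)
  also have "\<dots> = (\<Sum>i<2 ^ n. \<integral>\<^sup>+s. indicator (cell i) s * ennreal (\<mu>\<^sup>2 * (Y (dyad T n i) y z s \<omega> - y)\<^sup>2) \<partial>lborel)"
    using borel_measurable_indicator_ennreal_comp[OF _ Y_cell_meas, of _ "\<lambda>x. \<mu>\<^sup>2 * (x - y)\<^sup>2"]
    by (intro nn_integral_sum) (simp add: cell_def measurable_lborel2)
  also have "\<dots> \<le> (\<Sum>i<2 ^ n. ennreal (6 * \<mu>\<^sup>2 * h\<^sup>2) *
            (\<integral>\<^sup>+s. indicator {0..T} s * ennreal ((f \<omega> s y z)\<^sup>2) \<partial>lborel)
        + ennreal (6 * \<mu>\<^sup>2 * (norm z)\<^sup>2) *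
            (\<integral>\<^sup>+s. indicator (cell i) s * ennreal ((norm (B s \<omega> - B (dyad T n i) \<omega>))\<^sup>2) \<partial>lborel))"
  proof (intro sum_mono)
    fix i :: nat assume "i \<in> {..<2 ^ n}"
    then have i: "i < 2 ^ n" by simp
    have "continuous_on (cell i) (\<lambda>s. B s \<omega>)"
      by (rule continuous_on_subset[OF B_cont]) (use cell_sub(1)[OF i] in auto)
    then show "(\<integral>\<^sup>+s. indicator (cell i) s * ennreal (\<mu>\<^sup>2 * (Y (dyad T n i) y z s \<omega> - y)\<^sup>2) \<partial>lborel)
        \<le> ennreal (6 * \<mu>\<^sup>2 * h\<^sup>2) * (\<integral>\<^sup>+s. indicator {0..T} s * ennreal ((f \<omega> s y z)\<^sup>2) \<partial>lborel)
          + ennreal (6 * \<mu>\<^sup>2 * (norm z)\<^sup>2) *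
            (\<integral>\<^sup>+s. indicator (cell i) s * ennreal ((norm (B s \<omega> - B (dyad T n i) \<omega>))\<^sup>2) \<partial>lborel)"
      unfolding cell_def
      using small f_meas Y_cell_meas[OF i] cell_sub[OF i] Lip sol[OF i]
      by (intro integral_equation_cell_bound[OF h \<mu>]) (auto simp: h_def cell_def)
  qed
  finally show ?thesis
    by (simp add: cell_def h_def)
qed

lemma fn_approx_error_AE_bound:
  fixes M :: "'a measure" and B :: "real \<Rightarrow> 'a \<Rightarrow> real^'d"
    and f :: "'a \<Rightarrow> real \<Rightarrow> real \<Rightarrow> real^'d \<Rightarrow> real"
    and Y :: "real \<Rightarrow> real \<Rightarrow> real^'d \<Rightarrow> real \<Rightarrow> 'a \<Rightarrow> real"
  assumes BM: "brownian_motion M B" and T: "0 < T" and \<mu>: "0 \<le> \<mu>"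
    and small: "\<mu>\<^sup>2 * (T / 2 ^ n)\<^sup>2 \<le> 1/6"
    and f_meas: "(\<lambda>(s, \<omega>). f \<omega> s y z) \<in> borel_measurable (restrict_space lborel {0..T} \<Otimes>\<^sub>M M)"
    and f_Lip: "\<And>\<omega> s x. \<omega> \<in> space M \<Longrightarrow> s \<in> {0..T} \<Longrightarrow> \<bar>f \<omega> s x z - f \<omega> s y z\<bar> \<le> \<mu> * \<bar>x - y\<bar>"
    and Y_meas: "\<And>t. t \<in> {0..T} \<Longrightarrow>
      (\<lambda>(s, \<omega>). Y t y z s \<omega>) \<in> borel_measurable (restrict_space lborel {t..T} \<Otimes>\<^sub>M M)"
    and Y_sol: "\<And>t. t \<in> {0..T} \<Longrightarrow> AE \<omega> in M. \<forall>s\<in>{t..T}.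
      set_integrable lborel {t..s} (\<lambda>r. f \<omega> r (Y t y z r \<omega>) z) \<and>
      Y t y z s \<omega> = y - (LINT r:{t..s}|lborel. f \<omega> r (Y t y z r \<omega>) z) + z \<bullet> (B s \<omega> - B t \<omega>)"
  shows "AE \<omega> in M.
    (\<integral>\<^sup>+s. indicator {0..T} s * ennreal ((fn_approx f Y T n \<omega> s y z - f \<omega> s y z)\<^sup>2) \<partial>lborel)
    \<le> (\<Sum>i<2 ^ n. ennreal (6 * \<mu>\<^sup>2 * (T / 2 ^ n)\<^sup>2) *
            (\<integral>\<^sup>+s. indicator {0..T} s * ennreal ((f \<omega> s y z)\<^sup>2) \<partial>lborel)
        + ennreal (6 * \<mu>\<^sup>2 * (norm z)\<^sup>2) *
            (\<integral>\<^sup>+s. indicator {dyad T n i..dyad T n i + T / 2 ^ n} s *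
               ennreal ((norm (B s \<omega> - B (dyad T n i) \<omega>))\<^sup>2) \<partial>lborel))"
proof -
  have dyad_in: "dyad T n i \<in> {0..T}" if "i < 2 ^ n" for i
    using dyad_nonneg[of T n i] dyad_le[of T i n] T that by simp
  have "AE \<omega> in M. \<forall>i\<in>{..<2 ^ n}. \<forall>s\<in>{dyad T n i..T}.
      set_integrable lborel {dyad T n i..s} (\<lambda>r. f \<omega> r (Y (dyad T n i) y z r \<omega>) z) \<and>
      Y (dyad T n i) y z s \<omega> = y - (LINT r:{dyad T n i..s}|lborel. f \<omega> r (Y (dyad T n i) y z r \<omega>) z)
                                + z \<bullet> (B s \<omega> - B (dyad T n i) \<omega>)"
    using dyad_in by (intro AE_finite_allI Y_sol) auto
  then show ?thesis
    using AE_space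
  proof eventually_elim
    case (elim \<omega>)
    have "continuous_on {0..} (\<lambda>s. B s \<omega>)"
      using BM elim unfolding brownian_motion_def by auto
    with elim show ?case
      using dyad_in f_Lip[OF elim(2)]
      by (intro fn_approx_error_pathwise_bound[OF T \<mu> small]
          borel_measurable_indicator_times_section[OF f_meas]
          borel_measurable_indicator_times_section[OF Y_meas]) auto
  qed
qed

lemma fn_approx_error_expectation_bound:
  fixes M :: "'a measure" and B :: "real \<Rightarrow> 'a \<Rightarrow> real^'d"
    and f :: "'a \<Rightarrow> real \<Rightarrow> real \<Rightarrow> real^'d \<Rightarrow> real"
    and Y :: "real \<Rightarrow> real \<Rightarrow> real^'d \<Rightarrow> real \<Rightarrow> 'a \<Rightarrow> real"
  assumes BM: "brownian_motion M B" and T: "0 < T" and \<mu>: "0 \<le> \<mu>"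
    and small: "\<mu>\<^sup>2 * (T / 2 ^ n)\<^sup>2 \<le> 1/6"
    and f_meas: "(\<lambda>(s, \<omega>). f \<omega> s y z) \<in> borel_measurable (restrict_space lborel {0..T} \<Otimes>\<^sub>M M)"
    and f_Lip: "\<And>\<omega> s x. \<omega> \<in> space M \<Longrightarrow> s \<in> {0..T} \<Longrightarrow> \<bar>f \<omega> s x z - f \<omega> s y z\<bar> \<le> \<mu> * \<bar>x - y\<bar>"
    and Y_meas: "\<And>t. t \<in> {0..T} \<Longrightarrow>
      (\<lambda>(s, \<omega>). Y t y z s \<omega>) \<in> borel_measurable (restrict_space lborel {t..T} \<Otimes>\<^sub>M M)"
    and Y_sol: "\<And>t. t \<in> {0..T} \<Longrightarrow> AE \<omega> in M. \<forall>s\<in>{t..T}.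
      set_integrable lborel {t..s} (\<lambda>r. f \<omega> r (Y t y z r \<omega>) z) \<and>
      Y t y z s \<omega> = y - (LINT r:{t..s}|lborel. f \<omega> r (Y t y z r \<omega>) z) + z \<bullet> (B s \<omega> - B t \<omega>)"
  shows "(\<integral>\<^sup>+\<omega>. (\<integral>\<^sup>+s. indicator {0..T} s *
             ennreal ((fn_approx f Y T n \<omega> s y z - f \<omega> s y z)\<^sup>2) \<partial>lborel) \<partial>M)
    \<le> ennreal (6 * \<mu>\<^sup>2 * T * (T / 2 ^ n)) *
        ((\<integral>\<^sup>+\<omega>. (\<integral>\<^sup>+s. indicator {0..T} s * ennreal ((f \<omega> s y z)\<^sup>2) \<partial>lborel) \<partial>M)
         + ennreal (real CARD('d) * (norm z)\<^sup>2))"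
proof -
  define h where "h = T / 2 ^ n"
  define G where "G \<omega> = (\<integral>\<^sup>+s. indicator {0..T} s * ennreal ((f \<omega> s y z)\<^sup>2) \<partial>lborel)" for \<omega>
  define W where "W i \<omega> = (\<integral>\<^sup>+s. indicator {dyad T n i..dyad T n i + h} s *
      ennreal ((norm (B s \<omega> - B (dyad T n i) \<omega>))\<^sup>2) \<partial>lborel)" for i \<omega>
  define a where "a = ennreal (6 * \<mu>\<^sup>2 * h\<^sup>2)"
  define b where "b = ennreal (6 * \<mu>\<^sup>2 * (norm z)\<^sup>2)"
  have h: "0 < h"
    using T by (simp add: h_def)
  have G_meas [measurable]: "G \<in> borel_measurable M"
    unfolding G_def[abs_def] by (rule borel_measurable_nn_integral_indicator_square[OF f_meas])
  have W_meas [measurable]: "W i \<in> borel_measurable M" for i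
    unfolding W_def[abs_def] using T by (intro brownian_increment_path_L2_measurable[OF BM dyad_nonneg]) simp
  have "(\<integral>\<^sup>+\<omega>. (\<integral>\<^sup>+s. indicator {0..T} s *
             ennreal ((fn_approx f Y T n \<omega> s y z - f \<omega> s y z)\<^sup>2) \<partial>lborel) \<partial>M)
      \<le> (\<integral>\<^sup>+\<omega>. (\<Sum>i<2 ^ n. a * G \<omega> + b * W i \<omega>) \<partial>M)"
    using fn_approx_error_AE_bound[where f=f and Y=Y and y=y and z=z,
        OF BM T \<mu> small f_meas f_Lip Y_meas Y_sol]
    unfolding a_def b_def G_def W_def h_def
    by (rule nn_integral_mono_AE)
  also have "\<dots> = (\<Sum>i<2 ^ n. a * (\<integral>\<^sup>+\<omega>. G \<omega> \<partial>M) + b * (\<integral>\<^sup>+\<omega>. W i \<omega> \<partial>M))"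
    by (simp add: nn_integral_sum nn_integral_add nn_integral_cmult)
  also have "\<dots> \<le> (\<Sum>i<(2::nat) ^ n. a * (\<integral>\<^sup>+\<omega>. G \<omega> \<partial>M) + b * ennreal (real CARD('d) * h\<^sup>2))"
  proof (intro sum_mono add_mono mult_left_mono order_refl)
    fix i
    show "(\<integral>\<^sup>+\<omega>. W i \<omega> \<partial>M) \<le> ennreal (real CARD('d) * h\<^sup>2)"
      unfolding W_def using T h by (intro brownian_increment_path_L2_expectation[OF BM dyad_nonneg]) auto
  qed auto
  also have "\<dots> = ennreal (6 * \<mu>\<^sup>2 * T * h) *
        ((\<integral>\<^sup>+\<omega>. G \<omega> \<partial>M) + ennreal (real CARD('d) * (norm z)\<^sup>2))"
  proof -
    have hT: "T = real (2 ^ n) * h"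
      by (simp add: h_def)
    have "of_nat (2 ^ n) * a = ennreal (real (2 ^ n) * (6 * \<mu>\<^sup>2 * h\<^sup>2))"
      by (simp add: a_def ennreal_of_nat_eq_real_of_nat ennreal_mult)
    also have "\<dots> = ennreal (6 * \<mu>\<^sup>2 * T * h)"
      by (simp add: hT power2_eq_square mult_ac)
    finally have "of_nat (2 ^ n) * a = ennreal (6 * \<mu>\<^sup>2 * T * h)" .
    moreover have "of_nat (2 ^ n) * (b * ennreal (real CARD('d) * h\<^sup>2))
        = ennreal (real (2 ^ n) * (6 * \<mu>\<^sup>2 * (norm z)\<^sup>2 * (real CARD('d) * h\<^sup>2)))"
      by (simp add: b_def ennreal_of_nat_eq_real_of_nat ennreal_mult)
    moreover have "\<dots> = ennreal (6 * \<mu>\<^sup>2 * T * h) * ennreal (real CARD('d) * (norm z)\<^sup>2)"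
      using T h \<mu> by (subst ennreal_mult[symmetric])
        (auto simp: hT power2_eq_square mult_ac intro!: mult_nonneg_nonneg)
    ultimately show ?thesis
      by (simp add: distrib_left distrib_right mult.assoc[symmetric])
  qed
  finally show ?thesis
    by (simp add: G_def h_def)
qed

theorem lemma4p3:
  fixes M :: "'a measure"
    and B :: "real \<Rightarrow> 'a \<Rightarrow> real^'d"
    and T :: real and \<mu> :: real
    and f :: "'a \<Rightarrow> real \<Rightarrow> real \<Rightarrow> real^'d \<Rightarrow> real"
    and Y :: "real \<Rightarrow> real \<Rightarrow> real^'d \<Rightarrow> real \<Rightarrow> 'a \<Rightarrow> real"
    and y :: real and z :: "real^'d"
  assumes BM: "brownian_motion M B"
    and T_pos: "T > 0"
    and f_L2: "\<And>y z. L2F M B T (\<lambda>s \<omega>. f \<omega> s y z)"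
    and mu_pos: "\<mu> > 0"
    and f_Lip: "\<And>\<omega> t y y' z z'. \<omega> \<in> space M \<Longrightarrow> t \<in> {0..T} \<Longrightarrow>
                 \<bar>f \<omega> t y z - f \<omega> t y' z'\<bar> \<le> \<mu> * (\<bar>y - y'\<bar> + norm (z - z'))"
    and Y_meas: "\<And>t y z. t \<in> {0..T} \<Longrightarrow>
                 (\<lambda>(s, \<omega>). Y t y z s \<omega>) \<in> borel_measurable (restrict_space lborel {t..T} \<Otimes>\<^sub>M M)"
    and Y_adapted: "\<And>t y z s. t \<in> {0..T} \<Longrightarrow> s \<in> {t..T} \<Longrightarrow>
                 Y t y z s \<in> borel_measurable (nat_filtration M B s)"
    and Y_sol: "\<And>t y z. t \<in> {0..T} \<Longrightarrow>
                 AE \<omega> in M. \<forall>s\<in>{t..T}.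
                    set_integrable lborel {t..s} (\<lambda>r. f \<omega> r (Y t y z r \<omega>) z) \<and>
                    Y t y z s \<omega> = y - (LINT r:{t..s}|lborel. f \<omega> r (Y t y z r \<omega>) z)
                                     + z \<bullet> (B s \<omega> - B t \<omega>)"
  shows "(\<lambda>n. \<integral>\<^sup>+\<omega>. (\<integral>\<^sup>+s. indicator {0..T} s *
             ennreal ((fn_approx f Y T n \<omega> s y z - f \<omega> s y z)\<^sup>2) \<partial>lborel) \<partial>M)
         \<longlonglongrightarrow> 0"
proof -
  define C where "C = (\<integral>\<^sup>+\<omega>. (\<integral>\<^sup>+s. indicator {0..T} s * ennreal ((f \<omega> s y z)\<^sup>2) \<partial>lborel) \<partial>M)"
  define K where "K = C + ennreal (real CARD('d) * (norm z)\<^sup>2)"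
  have K_fin: "K < \<top>"
    using f_L2[of y z] unfolding L2F_def K_def C_def by simp
  have step: "(\<lambda>n. T / 2 ^ n) \<longlonglongrightarrow> 0"
    by (intro LIMSEQ_divide_realpow_zero) simp
  then have "eventually (\<lambda>n. \<mu>\<^sup>2 * (T / 2 ^ n)\<^sup>2 < 1/6) sequentially"
    by (intro order_tendstoD(2)[of _ "\<mu>\<^sup>2 * 0\<^sup>2"] tendsto_intros) auto
  then have bound: "eventually (\<lambda>n. (\<integral>\<^sup>+\<omega>. (\<integral>\<^sup>+s. indicator {0..T} s *
      ennreal ((fn_approx f Y T n \<omega> s y z - f \<omega> s y z)\<^sup>2) \<partial>lborel) \<partial>M)
      \<le> ennreal (6 * \<mu>\<^sup>2 * T * (T / 2 ^ n)) * K) sequentially"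
  proof eventually_elim
    case (elim n)
    show ?case
      unfolding K_def C_def
      using BM T_pos mu_pos elim f_L2[of y z] f_Lip[where z=z and z'=z] Y_meas Y_sol
      by (intro fn_approx_error_expectation_bound) (auto simp: L2F_def)
  qed
  have "(\<lambda>n. K * ennreal (6 * \<mu>\<^sup>2 * T * (T / 2 ^ n))) \<longlonglongrightarrow> K * ennreal 0"
    using K_fin by (intro ennreal_tendsto_cmult tendsto_ennrealI tendsto_mult_right_zero step)
  then have lim: "(\<lambda>n. ennreal (6 * \<mu>\<^sup>2 * T * (T / 2 ^ n)) * K) \<longlonglongrightarrow> 0"
    by (simp add: mult.commute)
  show ?thesis
    by (rule tendsto_sandwich[OF _ bound tendsto_const lim]) simp
qed

end
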